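(* For every $U\in\mathcal{U}(d)$ and every anti-Hermitian $K$ ($K^\dagger=-K$) with $\|K\|_F=1$, $\Big|\frac{d}{dt}H_2(e^{tK}U)\Big|_{t=0}\Big|\le\frac{8}{\sqrt d}$.
   Context: On $\mathbb{C}^{d_L}$ let $Z|k\rangle=\omega^k|k\rangle$, $X|k\rangle=|k+1\rangle$ (mod $d_L$), $\omega=e^{2\pi i/d_L}$, $\tau=-e^{i\pi/d_L}$, $D_{(a_1,a_2)}=\tau^{a_1a_2}X^{a_1}Z^{a_2}$, and for $\mathbf a=\mathbf a_1\oplus\cdots\oplus\mathbf a_n\in\mathbb{Z}_{d_L}^{2n}$ let $D_{\mathbf a}=D_{\mathbf a_1}\otimes\cdots\otimes D_{\mathbf a_n}$ acting on $\mathbb{C}^d$, $d=d_L^n$. The 2-Clifford entropy of a unitary $U$ is $H_2(U)=1-\frac{1}{d^6}\sum_{\mathbf a,\mathbf b}\big|\operatorname{tr}(D_{\mathbf a}^\dagger UD_{\mathbf b}U^\dagger)\big|^4$. $\|K\|_F=\sqrt{\operatorname{tr}(K^\dagger K)}$. *)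

theory Defs
  imports "HOL-Analysis.Analysis" "Jordan_Normal_Form.Schur_Decomposition"
begin

text \<open>Computational basis of (C^dL)^{\<otimes> n}: index k < dL^n, j-th qudit digit is
  (k div dL^j) mod dL (mixed radix encoding).\<close>
definition digit :: "nat \<Rightarrow> nat \<Rightarrow> nat \<Rightarrow> nat" where
  "digit dL k j = (k div dL ^ j) mod dL"

definition omega :: "nat \<Rightarrow> complex" where
  "omega dL = cis (2 * pi / real dL)"

definition tau :: "nat \<Rightarrow> complex" where
  "tau dL = - cis (pi / real dL)"

text \<open>Matrix entry (r,c) of the single-qudit operator D_(a1,a2) = tau^(a1 a2) X^a1 Z^a2,
  where X^a1 Z^a2 |c> = omega^(a2 c) |c + a1 mod dL>.\<close>
definition D1 :: "nat \<Rightarrow> nat \<Rightarrow> nat \<Rightarrow> nat \<Rightarrow> nat \<Rightarrow> complex" where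
  "D1 dL a1 a2 r c =
     (if r = (c + a1) mod dL then tau dL ^ (a1 * a2) * omega dL ^ (a2 * c) else 0)"

text \<open>Multi-qudit Weyl operator D_a, a = a_1 \<oplus> ... \<oplus> a_n, a_j = (a1_j, a2_j);
  the vectors (a1_j)_j and (a2_j)_j in Z_dL^n are encoded by their digits in the
  numbers A1, A2 < dL^n.\<close>
definition Dop :: "nat \<Rightarrow> nat \<Rightarrow> nat \<Rightarrow> nat \<Rightarrow> complex mat" where
  "Dop dL n A1 A2 = mat (dL ^ n) (dL ^ n)
     (\<lambda>(r, c). \<Prod>j<n. D1 dL (digit dL A1 j) (digit dL A2 j) (digit dL r j) (digit dL c j))"

definition mtrace :: "complex mat \<Rightarrow> complex" where
  "mtrace A = (\<Sum>i<dim_row A. A $$ (i, i))"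

definition frob_norm :: "complex mat \<Rightarrow> real" where
  "frob_norm K = sqrt (Re (mtrace (mat_adjoint K * K)))"

definition unitary_mat :: "nat \<Rightarrow> complex mat \<Rightarrow> bool" where
  "unitary_mat d U \<longleftrightarrow> U \<in> carrier_mat d d \<and> U * mat_adjoint U = 1\<^sub>m d
      \<and> mat_adjoint U * U = 1\<^sub>m d"

definition mat_exp :: "complex mat \<Rightarrow> complex mat" where
  "mat_exp A = mat (dim_row A) (dim_col A)
     (\<lambda>(i, j). \<Sum>m. (A ^\<^sub>m m) $$ (i, j) / of_nat (fact m))"

definition H2 :: "nat \<Rightarrow> nat \<Rightarrow> complex mat \<Rightarrow> real" where
  "H2 dL n U = 1 - 1 / real (dL ^ n) ^ 6 *
     (\<Sum>A1<dL^n. \<Sum>A2<dL^n. \<Sum>B1<dL^n. \<Sum>B2<dL^n.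
        cmod (mtrace (mat_adjoint (Dop dL n A1 A2) * U * Dop dL n B1 B2 * mat_adjoint U)) ^ 4)"

end

(*
  Write W(t) = exp(tK) U and T_ab(t) = tr(D_a^H W D_b W^H), so that
  H_2 = 1 - d^-6 sum_ab |T_ab|^4 and d/dt |T|^4 = 4 |T|^2 Re(conj(T) T').
  At t = 0 one has T'_ab = tr(D_a^H M_b) with M_b = K V_b + V_b K^H and V_b = U D_b U^H.
  The Weyl operators form an orthogonal basis of the d x d matrices with tr(D_a^H D_a) = d,
  so by Parseval sum_a |T_ab|^2 = d ||V_b||_F^2 = d^2 and sum_a |T'_ab|^2 = d ||M_b||_F^2 <= 4d.
  Hence |T_ab| <= d and, by Cauchy-Schwarz, sum_a |T_ab|^3 |T'_ab| <= d^2 sqrt(d^2 * 4d);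
  summing over the d^2 labels b gives |H_2'(0)| <= 4 d^-6 * d^2 * 2 d^3 sqrt d = 8 / sqrt d.
*)

theory Submission
  imports Defs
begin

section \<open>Adjoints, traces and the Frobenius norm\<close>

lemma mat_adjoint_dim [simp]:
  "dim_row (mat_adjoint A) = dim_col A" "dim_col (mat_adjoint A) = dim_row A"
  by (auto simp: mat_adjoint_def)

lemma index_mat_adjoint [simp]:
  "i < dim_col A \<Longrightarrow> j < dim_row A \<Longrightarrow> mat_adjoint A $$ (i, j) = cnj (A $$ (j, i))"
  by (auto simp: mat_adjoint_def mat_of_rows_def)

lemma mat_adjoint_carrier [simp]: "mat_adjoint A \<in> carrier_mat m n \<longleftrightarrow> A \<in> carrier_mat n m"
  unfolding carrier_mat_def by auto

lemma mat_adjoint_adjoint [simp]: "mat_adjoint (mat_adjoint A) = (A :: complex mat)"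
  by (rule eq_matI) auto

lemma index_mult_mat_sum:
  assumes "A \<in> carrier_mat n m" "B \<in> carrier_mat m k" "i < n" "j < k"
  shows "(A * B) $$ (i, j) = (\<Sum>l<m. A $$ (i, l) * B $$ (l, j))"
  using assms by (auto simp: scalar_prod_def atLeast0LessThan intro: sum.cong)

lemma mat_adjoint_mult:
  fixes A B :: "complex mat"
  assumes "A \<in> carrier_mat n m" "B \<in> carrier_mat m k"
  shows "mat_adjoint (A * B) = mat_adjoint B * mat_adjoint A"
proof (rule eq_matI)
  fix i j assume "i < dim_row (mat_adjoint B * mat_adjoint A)" "j < dim_col (mat_adjoint B * mat_adjoint A)"
  with assms have "i < k" "j < n" by auto
  with assms show "mat_adjoint (A * B) $$ (i, j) = (mat_adjoint B * mat_adjoint A) $$ (i, j)"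
    by (simp add: index_mult_mat_sum[of _ n m _ k] index_mult_mat_sum[of _ k m _ n] mult.commute
        del: index_mult_mat(1))
qed (use assms in auto)

lemma mtrace_adjoint_mult:
  assumes "A \<in> carrier_mat n m" "B \<in> carrier_mat n m"
  shows "mtrace (mat_adjoint A * B) = (\<Sum>i<n. \<Sum>j<m. cnj (A $$ (i, j)) * B $$ (i, j))"
proof -
  have "mtrace (mat_adjoint A * B) = (\<Sum>j<m. \<Sum>i<n. cnj (A $$ (i, j)) * B $$ (i, j))"
    using assms by (auto simp: mtrace_def index_mult_mat_sum[of _ m n _ m] simp del: index_mult_mat(1)
        intro!: sum.cong)
  then show ?thesis by (simp add: sum.swap[of _ "{..<m}"])
qed

lemma frob_norm_eq_sqrt_sum:
  assumes "A \<in> carrier_mat n m"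
  shows "frob_norm A = sqrt (\<Sum>i<n. \<Sum>j<m. cmod (A $$ (i, j)) ^ 2)"
proof -
  have "mtrace (mat_adjoint A * A) = of_real (\<Sum>i<n. \<Sum>j<m. cmod (A $$ (i, j)) ^ 2)"
    by (simp add: mtrace_adjoint_mult[OF assms assms] complex_norm_square[symmetric] mult.commute)
  then show ?thesis
    by (simp add: frob_norm_def)
qed

lemma frob_norm_nonneg: "0 \<le> frob_norm A"
  using frob_norm_eq_sqrt_sum[OF carrier_matI[OF refl refl]] by (simp add: sum_nonneg)

lemma frob_norm_sq:
  assumes "A \<in> carrier_mat n m"
  shows "frob_norm A ^ 2 = (\<Sum>i<n. \<Sum>j<m. cmod (A $$ (i, j)) ^ 2)"
  by (simp add: frob_norm_eq_sqrt_sum[OF assms] sum_nonneg)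

lemma frob_norm_eq_L2_set:
  assumes "A \<in> carrier_mat n m"
  shows "frob_norm A = L2_set (\<lambda>(i, j). cmod (A $$ (i, j))) ({..<n} \<times> {..<m})"
  by (simp add: frob_norm_eq_sqrt_sum[OF assms] L2_set_def sum.cartesian_product)

lemma frob_norm_add_le:
  assumes "A \<in> carrier_mat n m" "B \<in> carrier_mat n m"
  shows "frob_norm (A + B) \<le> frob_norm A + frob_norm B"
proof -
  define I where "I = {..<n} \<times> {..<m}"
  define f where "f = (\<lambda>(i, j). cmod (A $$ (i, j)))"
  define g where "g = (\<lambda>(i, j). cmod (B $$ (i, j)))"
  have "frob_norm (A + B) = L2_set (\<lambda>(i, j). cmod (A $$ (i, j) + B $$ (i, j))) I"
    using assms by (auto simp: frob_norm_eq_L2_set[of _ n m] I_def intro: L2_set_cong)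
  also have "\<dots> \<le> L2_set (\<lambda>p. f p + g p) I"
    by (rule L2_set_mono) (auto simp: f_def g_def norm_triangle_ineq)
  also have "\<dots> \<le> frob_norm A + frob_norm B"
    using L2_set_triangle_ineq[of f g I] assms by (simp add: frob_norm_eq_L2_set f_def g_def I_def)
  finally show ?thesis .
qed

lemma frob_norm_adjoint:
  assumes "A \<in> carrier_mat n m"
  shows "frob_norm (mat_adjoint A) = frob_norm A"
  using assms
  by (simp add: frob_norm_eq_sqrt_sum[of _ m n] frob_norm_eq_sqrt_sum[of _ n m] sum.swap[of _ "{..<m}"])

lemma unitary_matD:
  assumes "unitary_mat n V"
  shows "V \<in> carrier_mat n n" "V * mat_adjoint V = 1\<^sub>m n" "mat_adjoint V * V = 1\<^sub>m n"
  using assms unfolding unitary_mat_def by auto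

lemma unitary_mat_adjoint: "unitary_mat n V \<Longrightarrow> unitary_mat n (mat_adjoint V)"
  unfolding unitary_mat_def by auto

lemma frob_norm_unitary:
  assumes "unitary_mat n V"
  shows "frob_norm V = sqrt (real n)"
  using unitary_matD[OF assms] by (simp add: frob_norm_def mtrace_def)

lemma frob_norm_mult_unitary_left:
  assumes "unitary_mat n V" "A \<in> carrier_mat n m"
  shows "frob_norm (V * A) = frob_norm A"
proof -
  note V = unitary_matD[OF assms(1)]
  have "mat_adjoint (V * A) * (V * A) = mat_adjoint A * (mat_adjoint V * V) * A"
    using V(1) assms(2) by (simp add: mat_adjoint_mult[of _ n n _ m] assoc_mult_mat[of _ m n _ n _ m])
  also have "\<dots> = mat_adjoint A * A"
    using V(3) assms(2) by simp
  finally show ?thesis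
    by (simp add: frob_norm_def)
qed

lemma frob_norm_mult_unitary_right:
  assumes "A \<in> carrier_mat n m" "unitary_mat m V"
  shows "frob_norm (A * V) = frob_norm A"
proof -
  note V = unitary_matD[OF assms(2)]
  have "frob_norm (A * V) = frob_norm (mat_adjoint V * mat_adjoint A)"
    using assms(1) V(1) frob_norm_adjoint[of "A * V" n m] by (simp add: mat_adjoint_mult)
  also have "\<dots> = frob_norm (mat_adjoint A)"
    using assms by (intro frob_norm_mult_unitary_left[of m _ _ n] unitary_mat_adjoint) auto
  also have "\<dots> = frob_norm A"
    using assms(1) by (rule frob_norm_adjoint)
  finally show ?thesis .
qed

section \<open>The Weyl operators\<close>

lemma sum_lessThan_mult_split:
  fixes F :: "nat \<Rightarrow> 'a::comm_monoid_add"
  assumes "0 < b"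
  shows "(\<Sum>y<b * m. F y) = (\<Sum>x<b. \<Sum>q<m. F (x + b * q))"
proof -
  have "x + b * q < b * m" if "x < b" "q < m" for x q
  proof -
    have "x + b * q < b * Suc q" using that by simp
    also have "\<dots> \<le> b * m" using that by (intro mult_le_mono2) simp
    finally show ?thesis .
  qed
  then have "bij_betw (\<lambda>(x, q). x + b * q) ({..<b} \<times> {..<m}) {..<b * m}"
    using assms by (intro bij_betwI[where g = "\<lambda>y. (y mod b, y div b)"])
      (auto simp: less_mult_imp_div_less mult.commute)
  then show ?thesis
    by (simp add: sum.reindex_bij_betw[symmetric] sum.cartesian_product split_def)
qed

lemma sum_shift_mod:
  fixes m a :: nat
  assumes "0 < m"
  shows "(\<Sum>x<m. f ((x + a) mod m)) = (\<Sum>y<m. f y)"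
proof -
  have "inj_on (\<lambda>x. (x + a) mod m) {..<m}"
  proof (rule linorder_inj_onI')
    fix x y :: nat assume "x \<in> {..<m}" "y \<in> {..<m}" "x < y"
    then have "\<not> m dvd (y + a) - (x + a)"
      using nat_dvd_not_less[of "y - x" m] by simp
    then show "(x + a) mod m \<noteq> (y + a) mod m"
      using mod_eq_dvd_iff_nat[of "x + a" "y + a" m] \<open>x < y\<close> by simp
  qed
  moreover have "(\<lambda>x. (x + a) mod m) ` {..<m} = {..<m}"
    using assms calculation by (intro endo_inj_surj) auto
  ultimately show ?thesis
    by (intro sum.reindex_bij_betw) (simp add: bij_betw_def)
qed

lemma digit_0: "digit dL r 0 = r mod dL"
  by (simp add: digit_def)

lemma digit_Suc: "digit dL r (Suc j) = digit dL (r div dL) j"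
  by (simp add: digit_def div_mult2_eq)

lemma digit_less: "0 < dL \<Longrightarrow> digit dL r j < dL"
  by (simp add: digit_def)

lemma sum_prod_digits:
  fixes f :: "nat \<Rightarrow> nat \<Rightarrow> 'a::comm_semiring_1"
  assumes "0 < dL"
  shows "(\<Sum>r<dL ^ n. \<Prod>j<n. f j (digit dL r j)) = (\<Prod>j<n. \<Sum>x<dL. f j x)"
proof (induction n arbitrary: f)
  case 0
  then show ?case by simp
next
  case (Suc n)
  have "(\<Sum>r<dL ^ Suc n. \<Prod>j<Suc n. f j (digit dL r j))
      = (\<Sum>x<dL. \<Sum>q<dL ^ n. f 0 x * (\<Prod>j<n. f (Suc j) (digit dL q j)))"
    using assms by (auto simp: sum_lessThan_mult_split prod.lessThan_Suc_shift digit_0 digit_Suc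
        simp del: prod.lessThan_Suc intro!: sum.cong)
  also have "\<dots> = (\<Sum>x<dL. f 0 x) * (\<Prod>j<n. \<Sum>x<dL. f (Suc j) x)"
    by (simp add: Suc.IH[of "\<lambda>j. f (Suc j)"] sum_distrib_left[symmetric] sum_distrib_right)
  finally show ?case
    by (simp only: prod.lessThan_Suc_shift)
qed

lemma digits_eq_iff:
  assumes "0 < dL" "r < dL ^ n" "r' < dL ^ n"
  shows "(\<forall>j<n. digit dL r j = digit dL r' j) \<longleftrightarrow> r = r'"
  using assms(2,3)
proof (induction n arbitrary: r r')
  case (Suc n)
  have "r div dL < dL ^ n" "r' div dL < dL ^ n"
    using Suc.prems assms(1) by (simp_all add: less_mult_imp_div_less mult.commute)
  then have "(\<forall>j<n. digit dL (r div dL) j = digit dL (r' div dL) j) \<longleftrightarrow> r div dL = r' div dL"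
    by (rule Suc.IH)
  moreover have "(\<forall>j<Suc n. digit dL r j = digit dL r' j) \<longleftrightarrow>
      r mod dL = r' mod dL \<and> (\<forall>j<n. digit dL (r div dL) j = digit dL (r' div dL) j)"
    by (auto simp: less_Suc_eq_0_disj digit_0 digit_Suc)
  ultimately show ?case
    by (metis div_mult_mod_eq)
qed simp

lemma prod_if_zero:
  "(\<Prod>j<n. if P j then c else 0) = (if \<forall>j<n. P j then c ^ n else (0::'a::comm_semiring_1))"
  by (cases "\<forall>j<n. P j") (auto intro!: prod_zero)

lemma norm_omega [simp]: "cmod (omega dL) = 1"
  by (simp add: omega_def)

lemma norm_tau [simp]: "cmod (tau dL) = 1"
  by (simp add: tau_def)

lemma mult_cnj_eq_1: "cmod z = 1 \<Longrightarrow> z * cnj z = 1"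
  by (simp flip: complex_norm_square)

lemma omega_pow_eq_1_iff:
  assumes "0 < dL"
  shows "omega dL ^ k = 1 \<longleftrightarrow> dL dvd k"
proof -
  have "omega dL ^ k = exp (2 * of_real pi * \<i> * of_nat k / of_nat dL)"
    by (simp add: omega_def cis_conv_exp exp_of_nat_mult[symmetric] field_simps)
  then show ?thesis
    using complex_root_unity_eq_1[of dL k] assms by simp
qed

lemma cnj_omega:
  assumes "0 < dL"
  shows "cnj (omega dL) = omega dL ^ (dL - 1)"
proof -
  have "omega dL * omega dL ^ (dL - 1) = 1"
    using omega_pow_eq_1_iff[OF assms, of dL] assms by (simp flip: power_Suc)
  moreover have "omega dL * cnj (omega dL) = 1"
    by (simp add: mult_cnj_eq_1)
  moreover have "omega dL \<noteq> 0"
    using norm_omega[of dL] by (metis norm_zero zero_neq_one)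
  ultimately show ?thesis
    by (metis mult_left_cancel)
qed

lemma sum_cnj_omega_pow_mult:
  assumes "0 < dL" "c < dL" "c' < dL"
  shows "(\<Sum>a<dL. cnj (omega dL ^ (a * c)) * omega dL ^ (a * c')) = (if c = c' then of_nat dL else 0)"
proof -
  define k where "k = (dL - 1) * c + c'"
  define z where "z = omega dL ^ k"
  have "cnj (omega dL ^ (a * c)) * omega dL ^ (a * c') = z ^ a" for a
    by (simp add: z_def k_def cnj_omega[OF assms(1)] algebra_simps flip: power_mult power_add)
  moreover have "z = 1 \<longleftrightarrow> c = c'"
  proof -
    have kc: "k + c = dL * c + c'"
      using assms(1) by (cases dL) (simp_all add: k_def)
    have "dL dvd k \<longleftrightarrow> c = c'"
    proof
      assume "dL dvd k"
      then obtain q where "k = dL * q" by blast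
      then show "c = c'"
        using kc assms by (metis mod_mult_self3 mod_less mult.commute)
    qed (use kc in simp)
    then show ?thesis
      by (simp add: z_def omega_pow_eq_1_iff[OF assms(1)])
  qed
  moreover have "z ^ dL = 1"
    using assms(1) by (simp add: z_def omega_pow_eq_1_iff flip: power_mult)
  ultimately show ?thesis
    by (simp add: sum_gp_strict)
qed

lemma sum_D1_mult_cnj:
  assumes "0 < dL" "r < dL" "r' < dL"
  shows "(\<Sum>x<dL. D1 dL a1 a2 r x * cnj (D1 dL a1 a2 r' x)) = (if r = r' then 1 else 0)"
proof -
  have "D1 dL a1 a2 r x * cnj (D1 dL a1 a2 r' x) = (if (x + a1) mod dL = r \<and> r = r' then 1 else 0)" for x
    using mult_cnj_eq_1[of "tau dL ^ (a1 * a2) * omega dL ^ (a2 * x)"]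
    by (auto simp: D1_def norm_mult norm_power)
  then have "(\<Sum>x<dL. D1 dL a1 a2 r x * cnj (D1 dL a1 a2 r' x))
      = (\<Sum>x<dL. (\<lambda>y. if y = r \<and> r = r' then 1 else 0) ((x + a1) mod dL))"
    by simp
  also have "\<dots> = (\<Sum>y<dL. if y = r \<and> r = r' then 1 else 0)"
    using assms(1) by (rule sum_shift_mod)
  finally show ?thesis
    using assms(2) by simp
qed

lemma sum_cnj_D1_mult:
  assumes "0 < dL" "r < dL" "c < dL" "r' < dL" "c' < dL"
  shows "(\<Sum>a1<dL. \<Sum>a2<dL. cnj (D1 dL a1 a2 r c) * D1 dL a1 a2 r' c')
       = (if r = r' \<and> c = c' then of_nat dL else 0)"
proof -
  have "cnj (tau dL ^ (a1 * a2)) * tau dL ^ (a1 * a2) = 1" for a1 a2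
    using mult_cnj_eq_1[of "tau dL ^ (a1 * a2)"] by (simp add: norm_power mult.commute)
  then have inner: "(\<Sum>a2<dL. cnj (D1 dL a1 a2 r c) * D1 dL a1 a2 r' c')
      = (if (c + a1) mod dL = r \<and> (c' + a1) mod dL = r'
         then \<Sum>a2<dL. cnj (omega dL ^ (a2 * c)) * omega dL ^ (a2 * c') else 0)" for a1
    by (auto simp: D1_def simp del: complex_cnj_power intro!: sum.cong)
  have "(\<Sum>a1<dL. \<Sum>a2<dL. cnj (D1 dL a1 a2 r c) * D1 dL a1 a2 r' c')
      = (\<Sum>a1<dL. (\<lambda>y. if y = r \<and> r = r' \<and> c = c' then of_nat dL else 0) ((a1 + c) mod dL))"
    unfolding inner sum_cnj_omega_pow_mult[OF assms(1,3,5)] by (auto simp: add.commute intro!: sum.cong)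
  also have "\<dots> = (\<Sum>y<dL. if y = r \<and> r = r' \<and> c = c' then of_nat dL else 0)"
    using assms(1) by (rule sum_shift_mod)
  finally show ?thesis
    using assms(2) by simp
qed

lemma Dop_dim [simp]: "dim_row (Dop dL n a1 a2) = dL ^ n" "dim_col (Dop dL n a1 a2) = dL ^ n"
  by (simp_all add: Dop_def)

lemma Dop_carrier [simp]: "Dop dL n a1 a2 \<in> carrier_mat (dL ^ n) (dL ^ n)"
  by (rule carrier_matI) simp_all

lemma index_Dop:
  "r < dL ^ n \<Longrightarrow> c < dL ^ n \<Longrightarrow>
   Dop dL n a1 a2 $$ (r, c) = (\<Prod>j<n. D1 dL (digit dL a1 j) (digit dL a2 j) (digit dL r j) (digit dL c j))"
  by (simp add: Dop_def)

lemma Dop_unitary: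
  assumes "0 < dL"
  shows "unitary_mat (dL ^ n) (Dop dL n a1 a2)"
proof -
  let ?D = "Dop dL n a1 a2"
  have "?D * mat_adjoint ?D = 1\<^sub>m (dL ^ n)"
  proof (rule eq_matI)
    fix r r' assume "r < dim_row (1\<^sub>m (dL ^ n))" "r' < dim_col (1\<^sub>m (dL ^ n))"
    then have r: "r < dL ^ n" "r' < dL ^ n" by auto
    have "(?D * mat_adjoint ?D) $$ (r, r') = (\<Sum>c<dL ^ n. \<Prod>j<n.
        D1 dL (digit dL a1 j) (digit dL a2 j) (digit dL r j) (digit dL c j) *
        cnj (D1 dL (digit dL a1 j) (digit dL a2 j) (digit dL r' j) (digit dL c j)))"
      using r by (auto simp: index_mult_mat_sum[of _ "dL ^ n" "dL ^ n" _ "dL ^ n"] index_Dop prod.distrib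
          simp del: index_mult_mat(1) intro!: sum.cong)
    also have "\<dots> = (\<Prod>j<n. \<Sum>x<dL. D1 dL (digit dL a1 j) (digit dL a2 j) (digit dL r j) x *
        cnj (D1 dL (digit dL a1 j) (digit dL a2 j) (digit dL r' j) x))"
      by (rule sum_prod_digits[OF assms])
    also have "\<dots> = (\<Prod>j<n. if digit dL r j = digit dL r' j then 1 else 0)"
      using assms by (simp add: sum_D1_mult_cnj digit_less)
    also have "\<dots> = 1\<^sub>m (dL ^ n) $$ (r, r')"
      using r assms by (simp add: prod_if_zero digits_eq_iff)
    finally show "(?D * mat_adjoint ?D) $$ (r, r') = 1\<^sub>m (dL ^ n) $$ (r, r')" .
  qed auto
  then show ?thesis
    using mat_mult_left_right_inverse[of ?D "dL ^ n" "mat_adjoint ?D"] by (simp add: unitary_mat_def)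
qed

lemma sum_cnj_Dop_mult:
  assumes "0 < dL" "r < dL ^ n" "c < dL ^ n" "r' < dL ^ n" "c' < dL ^ n"
  shows "(\<Sum>(a1, a2)\<in>{..<dL ^ n} \<times> {..<dL ^ n}. cnj (Dop dL n a1 a2 $$ (r, c)) * Dop dL n a1 a2 $$ (r', c'))
       = (if r = r' \<and> c = c' then of_nat (dL ^ n) else 0)"
proof -
  define g where "g j x y = cnj (D1 dL x y (digit dL r j) (digit dL c j)) *
    D1 dL x y (digit dL r' j) (digit dL c' j)" for j x y
  have "(\<Sum>(a1, a2)\<in>{..<dL ^ n} \<times> {..<dL ^ n}. cnj (Dop dL n a1 a2 $$ (r, c)) * Dop dL n a1 a2 $$ (r', c'))
      = (\<Sum>a1<dL ^ n. \<Sum>a2<dL ^ n. \<Prod>j<n. g j (digit dL a1 j) (digit dL a2 j))"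
    using assms by (simp add: sum.cartesian_product[symmetric] index_Dop g_def prod.distrib)
  also have "\<dots> = (\<Sum>a1<dL ^ n. \<Prod>j<n. \<Sum>y<dL. g j (digit dL a1 j) y)"
    using sum_prod_digits[OF assms(1), where f = "\<lambda>j. g j (digit dL _ j)"] by simp
  also have "\<dots> = (\<Prod>j<n. \<Sum>x<dL. \<Sum>y<dL. g j x y)"
    using sum_prod_digits[OF assms(1), where f = "\<lambda>j x. \<Sum>y<dL. g j x y"] by simp
  also have "\<dots> = (\<Prod>j<n. if digit dL r j = digit dL r' j \<and> digit dL c j = digit dL c' j
      then of_nat dL else 0)"
    using assms(1) by (simp add: g_def sum_cnj_D1_mult digit_less)
  also have "\<dots> = (if r = r' \<and> c = c' then of_nat (dL ^ n) else 0)"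
    using assms by (simp add: prod_if_zero digits_eq_iff[symmetric] all_conj_distrib)
  finally show ?thesis .
qed

lemma sum_norm_sq_tight_frame:
  fixes B :: "'p \<Rightarrow> 'q \<Rightarrow> complex" and v :: "'q \<Rightarrow> complex"
  assumes "finite P" "finite Q"
    and "\<And>q q'. q \<in> Q \<Longrightarrow> q' \<in> Q \<Longrightarrow> (\<Sum>p\<in>P. cnj (B p q) * B p q') = (if q = q' then of_real c else 0)"
  shows "(\<Sum>p\<in>P. cmod (\<Sum>q\<in>Q. cnj (B p q) * v q) ^ 2) = c * (\<Sum>q\<in>Q. cmod (v q) ^ 2)"
proof -
  have "complex_of_real (\<Sum>p\<in>P. cmod (\<Sum>q\<in>Q. cnj (B p q) * v q) ^ 2)
      = (\<Sum>p\<in>P. (\<Sum>q\<in>Q. cnj (B p q) * v q) * (\<Sum>q'\<in>Q. B p q' * cnj (v q')))"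
    by (simp only: of_real_sum complex_norm_square cnj_sum complex_cnj_mult complex_cnj_cnj)
  also have "\<dots> = (\<Sum>p\<in>P. \<Sum>q\<in>Q. \<Sum>q'\<in>Q. cnj (B p q) * B p q' * (v q * cnj (v q')))"
    by (simp only: sum_product) (simp only: mult_ac)
  also have "\<dots> = (\<Sum>q\<in>Q. \<Sum>q'\<in>Q. (\<Sum>p\<in>P. cnj (B p q) * B p q') * (v q * cnj (v q')))"
    by (simp only: sum.swap[of _ P Q] sum_distrib_right)
  also have "\<dots> = (\<Sum>q\<in>Q. \<Sum>q'\<in>Q. if q = q' then of_real c * (v q * cnj (v q')) else 0)"
    using assms(3) by (intro sum.cong refl) simp
  also have "\<dots> = (\<Sum>q\<in>Q. of_real c * (v q * cnj (v q)))"
    using assms(2) by (simp add: sum.delta)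
  also have "\<dots> = complex_of_real (c * (\<Sum>q\<in>Q. cmod (v q) ^ 2))"
    by (simp only: of_real_mult of_real_sum complex_norm_square sum_distrib_left)
  finally show ?thesis
    by (simp only: of_real_eq_iff)
qed

definition weyl :: "nat \<Rightarrow> nat \<Rightarrow> nat \<times> nat \<Rightarrow> complex mat" where
  "weyl dL n = (\<lambda>(a1, a2). Dop dL n a1 a2)"

lemma weyl_carrier [simp]: "weyl dL n a \<in> carrier_mat (dL ^ n) (dL ^ n)"
  by (simp add: weyl_def split_def)

lemma weyl_unitary: "0 < dL \<Longrightarrow> unitary_mat (dL ^ n) (weyl dL n a)"
  by (simp add: weyl_def split_def Dop_unitary)

lemma sum_norm_mtrace_weyl_sq:
  assumes "0 < dL" "M \<in> carrier_mat (dL ^ n) (dL ^ n)"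
  shows "(\<Sum>a\<in>{..<dL ^ n} \<times> {..<dL ^ n}. cmod (mtrace (mat_adjoint (weyl dL n a) * M)) ^ 2)
       = real (dL ^ n) * frob_norm M ^ 2"
proof -
  let ?I = "{..<dL ^ n} \<times> {..<dL ^ n}"
  have "(\<Sum>a\<in>?I. cmod (mtrace (mat_adjoint (weyl dL n a) * M)) ^ 2)
      = (\<Sum>a\<in>?I. cmod (\<Sum>q\<in>?I. cnj (weyl dL n a $$ q) * M $$ q) ^ 2)"
    using assms(2) by (simp add: mtrace_adjoint_mult[of _ "dL ^ n" "dL ^ n"] sum.cartesian_product split_def)
  also have "\<dots> = real (dL ^ n) * (\<Sum>q\<in>?I. cmod (M $$ q) ^ 2)"
    using assms(1) by (intro sum_norm_sq_tight_frame)
      (auto simp: weyl_def sum_cnj_Dop_mult[unfolded split_def] split_def split: if_splits)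
  also have "\<dots> = real (dL ^ n) * frob_norm M ^ 2"
    using assms(2) by (simp add: frob_norm_sq sum.cartesian_product)
  finally show ?thesis .
qed

section \<open>Derivatives of matrix-valued paths\<close>

(* The type of matrices carries no topology, so paths of matrices are differentiated entrywise. *)
definition has_mat_derivative :: "(real \<Rightarrow> complex mat) \<Rightarrow> complex mat \<Rightarrow> real \<Rightarrow> bool" where
  "has_mat_derivative W W' x \<longleftrightarrow>
     (\<forall>i<dim_row W'. \<forall>j<dim_col W'. ((\<lambda>t. W t $$ (i, j)) has_vector_derivative W' $$ (i, j)) (at x))"

lemma has_mat_derivative_const:
  "A \<in> carrier_mat n m \<Longrightarrow> has_mat_derivative (\<lambda>t. A) (0\<^sub>m n m) x"
  by (simp add: has_mat_derivative_def)

lemma has_mat_derivative_mult: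
  assumes "\<And>t. P t \<in> carrier_mat n m" "\<And>t. Q t \<in> carrier_mat m k"
    and "P' \<in> carrier_mat n m" "Q' \<in> carrier_mat m k"
    and "has_mat_derivative P P' x" "has_mat_derivative Q Q' x"
  shows "has_mat_derivative (\<lambda>t. P t * Q t) (P' * Q x + P x * Q') x"
  unfolding has_mat_derivative_def
proof (intro allI impI)
  fix i j assume "i < dim_row (P' * Q x + P x * Q')" "j < dim_col (P' * Q x + P x * Q')"
  with carrier_matD[OF assms(1)] carrier_matD[OF assms(4)] have ij: "i < n" "j < k" by auto
  have "((\<lambda>t. \<Sum>l<m. P t $$ (i, l) * Q t $$ (l, j)) has_vector_derivative
      (\<Sum>l<m. P x $$ (i, l) * Q' $$ (l, j) + P' $$ (i, l) * Q x $$ (l, j))) (at x)"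
    using assms ij by (intro has_vector_derivative_sum has_vector_derivative_mult)
      (auto simp: has_mat_derivative_def)
  moreover have "(P' * Q x + P x * Q') $$ (i, j)
      = (\<Sum>l<m. P x $$ (i, l) * Q' $$ (l, j) + P' $$ (i, l) * Q x $$ (l, j))"
    using assms ij carrier_matD[OF assms(1)] carrier_matD[OF assms(4)]
    by (simp add: index_mult_mat_sum[of _ n m _ k] sum.distrib add.commute del: index_mult_mat(1))
  ultimately show "((\<lambda>t. (P t * Q t) $$ (i, j)) has_vector_derivative (P' * Q x + P x * Q') $$ (i, j)) (at x)"
    using assms ij by (simp add: index_mult_mat_sum[of _ n m _ k] del: index_mult_mat(1))
qed

lemma has_mat_derivative_adjoint:
  assumes "\<And>t. W t \<in> carrier_mat n m" "W' \<in> carrier_mat n m" "has_mat_derivative W W' x"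
  shows "has_mat_derivative (\<lambda>t. mat_adjoint (W t)) (mat_adjoint W') x"
  using assms carrier_matD[OF assms(1)] by (auto simp: has_mat_derivative_def intro!: has_vector_derivative_cnj)

lemma has_vector_derivative_mtrace:
  assumes "\<And>t. W t \<in> carrier_mat n n" "W' \<in> carrier_mat n n" "has_mat_derivative W W' x"
  shows "((\<lambda>t. mtrace (W t)) has_vector_derivative mtrace W') (at x)"
  using assms carrier_matD[OF assms(1)] unfolding mtrace_def has_mat_derivative_def
  by (auto intro!: has_vector_derivative_sum)

lemma has_mat_derivative_mult_const_left:
  assumes "X \<in> carrier_mat n m" "\<And>t. W t \<in> carrier_mat m k" "W' \<in> carrier_mat m k"
    and "has_mat_derivative W W' x"
  shows "has_mat_derivative (\<lambda>t. X * W t) (X * W') x"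
proof -
  have "has_mat_derivative (\<lambda>t. X * W t) (0\<^sub>m n m * W x + X * W') x"
    using assms by (intro has_mat_derivative_mult has_mat_derivative_const) auto
  moreover have "0\<^sub>m n m * W x + X * W' = X * W'"
    using mult_carrier_mat[OF assms(1,3)] carrier_matD[OF assms(2)] by simp
  ultimately show ?thesis
    by simp
qed

lemma has_mat_derivative_mult_const_right:
  assumes "\<And>t. W t \<in> carrier_mat n m" "W' \<in> carrier_mat n m" "Y \<in> carrier_mat m k"
    and "has_mat_derivative W W' x"
  shows "has_mat_derivative (\<lambda>t. W t * Y) (W' * Y) x"
proof -
  have "has_mat_derivative (\<lambda>t. W t * Y) (W' * Y + W x * 0\<^sub>m m k) x"
    using assms by (intro has_mat_derivative_mult has_mat_derivative_const) auto
  moreover have "W' * Y + W x * 0\<^sub>m m k = W' * Y"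
    using mult_carrier_mat[OF assms(2,3)] carrier_matD[OF assms(1)] by simp
  ultimately show ?thesis
    by simp
qed

lemma has_vector_derivative_mtrace_conj:
  assumes "\<And>t. W t \<in> carrier_mat n n" "W' \<in> carrier_mat n n"
    and "X \<in> carrier_mat n n" "Y \<in> carrier_mat n n" "has_mat_derivative W W' x"
  shows "((\<lambda>t. mtrace (X * (W t * Y * mat_adjoint (W t)))) has_vector_derivative
      mtrace (X * (W' * Y * mat_adjoint (W x) + W x * Y * mat_adjoint W'))) (at x)"
proof -
  have WY: "W t * Y \<in> carrier_mat n n" "W' * Y \<in> carrier_mat n n" for t
    using assms by (auto intro: mult_carrier_mat)
  have "has_mat_derivative (\<lambda>t. W t * Y * mat_adjoint (W t))
      (W' * Y * mat_adjoint (W x) + W x * Y * mat_adjoint W') x"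
    using assms WY by (intro has_mat_derivative_mult has_mat_derivative_mult_const_right
        has_mat_derivative_adjoint) auto
  then have "has_mat_derivative (\<lambda>t. X * (W t * Y * mat_adjoint (W t)))
      (X * (W' * Y * mat_adjoint (W x) + W x * Y * mat_adjoint W')) x"
    using assms WY by (intro has_mat_derivative_mult_const_left[of X n n _ n])
      (auto intro!: mult_carrier_mat[of _ _ n] add_carrier_mat)
  then show ?thesis
    using assms WY by (intro has_vector_derivative_mtrace[of _ n])
      (auto intro!: mult_carrier_mat[of _ _ n] add_carrier_mat)
qed

lemma index_pow_smult_mat:
  fixes A :: "'a::comm_semiring_1 mat"
  assumes "A \<in> carrier_mat n n" "i < n" "j < n"
  shows "((c \<cdot>\<^sub>m A) ^\<^sub>m k) $$ (i, j) = c ^ k * (A ^\<^sub>m k) $$ (i, j)"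
  using assms(3)
proof (induction k arbitrary: j)
  case 0
  then show ?case
    using assms(1,2) by simp
next
  case (Suc k)
  then show ?case
    using assms(1,2) by (simp add: index_mult_mat_sum[of _ n n _ n] sum_distrib_left
        del: index_mult_mat(1); simp add: mult_ac)
qed

lemma norm_index_pow_mat_le:
  assumes "A \<in> carrier_mat n n" "i < n" "j < n"
  shows "cmod ((A ^\<^sub>m k) $$ (i, j)) \<le> (\<Sum>p<n. \<Sum>q<n. cmod (A $$ (p, q))) ^ k"
  using assms(3)
proof (induction k arbitrary: j)
  case 0
  then show ?case
    using assms(1,2) by simp
next
  case (Suc k)
  define C where "C = (\<Sum>p<n. \<Sum>q<n. cmod (A $$ (p, q)))"
  have "cmod ((A ^\<^sub>m Suc k) $$ (i, j)) \<le> (\<Sum>l<n. cmod ((A ^\<^sub>m k) $$ (i, l)) * cmod (A $$ (l, j)))"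
    using Suc.prems assms by (simp add: index_mult_mat_sum[of _ n n _ n] norm_mult
        order_trans[OF norm_sum] del: index_mult_mat(1))
  also have "\<dots> \<le> (\<Sum>l<n. C ^ k * cmod (A $$ (l, j)))"
    using Suc.IH by (intro sum_mono mult_right_mono) (auto simp: C_def)
  also have "\<dots> \<le> C ^ k * C"
  proof -
    have "(\<Sum>l<n. cmod (A $$ (l, j))) \<le> C"
      unfolding C_def using Suc.prems by (intro sum_mono member_le_sum) auto
    then show ?thesis
      by (simp add: sum_distrib_left[symmetric] C_def mult_left_mono sum_nonneg)
  qed
  finally show ?case
    by (simp add: C_def mult.commute)
qed

lemma index_mat_exp_smult:
  assumes "K \<in> carrier_mat n n" "i < n" "j < n"
  shows "mat_exp (c \<cdot>\<^sub>m K) $$ (i, j) = (\<Sum>m. (K ^\<^sub>m m) $$ (i, j) / of_nat (fact m) * c ^ m)"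
  using assms by (simp add: mat_exp_def index_pow_smult_mat mult.commute)

lemma summable_mat_exp_entry:
  fixes K :: "complex mat"
  assumes "K \<in> carrier_mat n n" "i < n" "j < n"
  shows "summable (\<lambda>m. (K ^\<^sub>m m) $$ (i, j) / of_nat (fact m) * z ^ m)"
proof -
  define C where "C = (\<Sum>p<n. \<Sum>q<n. cmod (K $$ (p, q)))"
  have "summable (\<lambda>m. inverse (fact m) * (C * cmod z) ^ m)"
    by (rule summable_exp)
  moreover have "norm ((K ^\<^sub>m m) $$ (i, j) / of_nat (fact m) * z ^ m) \<le> inverse (fact m) * (C * cmod z) ^ m"
    for m
  proof -
    have "norm ((K ^\<^sub>m m) $$ (i, j) / of_nat (fact m) * z ^ m)
        = cmod ((K ^\<^sub>m m) $$ (i, j)) / fact m * cmod z ^ m"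
      by (simp add: norm_mult norm_divide norm_power)
    also have "\<dots> \<le> C ^ m / fact m * cmod z ^ m"
      using norm_index_pow_mat_le[OF assms, of m]
      by (intro mult_right_mono divide_right_mono) (auto simp: C_def)
    finally show ?thesis
      by (simp add: power_mult_distrib divide_inverse mult_ac)
  qed
  ultimately show ?thesis
    by (rule summable_comparison_test'[where N = 0])
qed

lemma mat_exp_carrier: "A \<in> carrier_mat n m \<Longrightarrow> mat_exp A \<in> carrier_mat n m"
  by (rule carrier_matI) (auto simp: mat_exp_def)

lemma mat_exp_zero:
  assumes "K \<in> carrier_mat n n"
  shows "mat_exp (0 \<cdot>\<^sub>m K) = 1\<^sub>m n"
proof (rule eq_matI)
  fix i j assume "i < dim_row (1\<^sub>m n)" "j < dim_col (1\<^sub>m n)"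
  then show "mat_exp (0 \<cdot>\<^sub>m K) $$ (i, j) = 1\<^sub>m n $$ (i, j)"
    using assms powser_zero[of "\<lambda>m. (K ^\<^sub>m m) $$ (i, j) / of_nat (fact m)"]
    by (simp add: index_mat_exp_smult)
qed (use assms in \<open>simp_all add: mat_exp_def\<close>)

lemma has_mat_derivative_mat_exp:
  assumes "K \<in> carrier_mat n n"
  shows "has_mat_derivative (\<lambda>t. mat_exp (complex_of_real t \<cdot>\<^sub>m K)) K 0"
  unfolding has_mat_derivative_def
proof (intro allI impI)
  fix i j assume "i < dim_row K" "j < dim_col K"
  with assms have ij: "i < n" "j < n" by auto
  define a where "a m = (K ^\<^sub>m m) $$ (i, j) / of_nat (fact m)" for m
  have "((\<lambda>z. \<Sum>m. a m * z ^ m) has_field_derivative (\<Sum>m. diffs a m * 0 ^ m)) (at 0)"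
    unfolding a_def by (intro termdiffs_strong_converges_everywhere summable_mat_exp_entry[OF assms ij])
  moreover have "(\<Sum>m. diffs a m * 0 ^ m) = K $$ (i, j)"
    using assms powser_zero[of "diffs a"] by (simp add: diffs_def a_def)
  ultimately have "((\<lambda>t. \<Sum>m. a m * complex_of_real t ^ m) has_vector_derivative K $$ (i, j)) (at 0)"
    by (intro has_vector_derivative_real_field) simp
  then show "((\<lambda>t. mat_exp (complex_of_real t \<cdot>\<^sub>m K) $$ (i, j)) has_vector_derivative K $$ (i, j)) (at 0)"
    using assms ij by (simp add: index_mat_exp_smult a_def)
qed

section \<open>The derivative of the 2-Clifford entropy\<close>

lemma has_real_derivative_norm_pow4:
  fixes f :: "real \<Rightarrow> complex"
  assumes "(f has_vector_derivative f') (at x)"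
  shows "((\<lambda>t. cmod (f t) ^ 4) has_real_derivative 4 * cmod (f x) ^ 2 * Re (cnj (f x) * f')) (at x)"
proof -
  have "(\<lambda>t. cmod (f t) ^ 4) = (\<lambda>t. (Re (f t) ^ 2 + Im (f t) ^ 2) ^ 2)"
    by (simp add: cmod_power2[symmetric] flip: power_mult)
  moreover have "((\<lambda>t. (Re (f t) ^ 2 + Im (f t) ^ 2) ^ 2) has_real_derivative
      4 * cmod (f x) ^ 2 * Re (cnj (f x) * f')) (at x)"
    using assms by (auto intro!: derivative_eq_intros simp: cmod_power2 algebra_simps)
  ultimately show ?thesis
    by simp
qed

lemma has_real_derivative_sum_norm_mtrace_conj_pow4:
  assumes "\<And>a. a \<in> A \<Longrightarrow> X a \<in> carrier_mat n n" "\<And>b. b \<in> B \<Longrightarrow> Y b \<in> carrier_mat n n"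
    and "\<And>t. W t \<in> carrier_mat n n" "W' \<in> carrier_mat n n" "has_mat_derivative W W' x"
  shows "((\<lambda>t. \<Sum>a\<in>A. \<Sum>b\<in>B. cmod (mtrace (X a * (W t * Y b * mat_adjoint (W t)))) ^ 4)
    has_real_derivative (\<Sum>a\<in>A. \<Sum>b\<in>B.
      4 * cmod (mtrace (X a * (W x * Y b * mat_adjoint (W x)))) ^ 2 *
      Re (cnj (mtrace (X a * (W x * Y b * mat_adjoint (W x)))) *
          mtrace (X a * (W' * Y b * mat_adjoint (W x) + W x * Y b * mat_adjoint W'))))) (at x)"
  using assms
  by (intro DERIV_sum has_real_derivative_norm_pow4 has_vector_derivative_mtrace_conj[of _ n]) auto

lemma sum_cube_mult_le:
  fixes x y :: "'a \<Rightarrow> real"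
  assumes "finite A" "\<And>a. a \<in> A \<Longrightarrow> 0 \<le> x a" "\<And>a. a \<in> A \<Longrightarrow> 0 \<le> y a"
    and "(\<Sum>a\<in>A. x a ^ 2) \<le> s" "(\<Sum>a\<in>A. y a ^ 2) \<le> r"
  shows "(\<Sum>a\<in>A. x a ^ 3 * y a) \<le> s * sqrt (s * r)"
proof -
  have x_sq_le: "x a ^ 2 \<le> s" if "a \<in> A" for a
    using member_le_sum[of a A "\<lambda>a. x a ^ 2"] assms(1,4) that by simp
  have s: "0 \<le> s"
    using assms(4) sum_nonneg[of A "\<lambda>a. x a ^ 2"] by simp
  have "(\<Sum>a\<in>A. x a ^ 3 * y a) \<le> (\<Sum>a\<in>A. s * (\<bar>x a\<bar> * \<bar>y a\<bar>))"
  proof (rule sum_mono)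
    fix a assume "a \<in> A"
    then have "x a ^ 2 * (x a * y a) \<le> s * (x a * y a)"
      using assms(2,3) x_sq_le by (intro mult_right_mono) auto
    then show "x a ^ 3 * y a \<le> s * (\<bar>x a\<bar> * \<bar>y a\<bar>)"
      using assms(2,3) \<open>a \<in> A\<close> by (simp add: power3_eq_cube power2_eq_square mult_ac)
  qed
  also have "\<dots> \<le> s * (L2_set x A * L2_set y A)"
    using s by (simp add: sum_distrib_left[symmetric] mult_left_mono L2_set_mult_ineq)
  also have "\<dots> \<le> s * (sqrt s * sqrt r)"
    using s assms(4,5) by (intro mult_left_mono mult_mono) (auto simp: L2_set_def sum_nonneg)
  finally show ?thesis
    by (simp add: real_sqrt_mult)
qed

lemma H2_eq_sum_weyl:
  assumes "W \<in> carrier_mat (dL ^ n) (dL ^ n)"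
  shows "H2 dL n W = 1 - 1 / real (dL ^ n) ^ 6 *
    (\<Sum>a\<in>{..<dL ^ n} \<times> {..<dL ^ n}. \<Sum>b\<in>{..<dL ^ n} \<times> {..<dL ^ n}.
      cmod (mtrace (mat_adjoint (weyl dL n a) * (W * weyl dL n b * mat_adjoint W))) ^ 4)"
proof -
  have "mat_adjoint (Dop dL n a1 a2) * W * Dop dL n b1 b2 * mat_adjoint W
      = mat_adjoint (Dop dL n a1 a2) * (W * Dop dL n b1 b2 * mat_adjoint W)" for a1 a2 b1 b2
    using assms by (simp add: assoc_mult_mat[of _ "dL ^ n" "dL ^ n" _ "dL ^ n" _ "dL ^ n"])
  then show ?thesis
    by (simp add: H2_def weyl_def sum.cartesian_product')
qed

lemma frob_norm_unitary_conj:
  assumes "unitary_mat n U" "unitary_mat n B"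
  shows "frob_norm (U * B * mat_adjoint U) = sqrt (real n)"
proof -
  note U = unitary_matD[OF assms(1)] and B = unitary_matD[OF assms(2)]
  have "frob_norm (U * B * mat_adjoint U) = frob_norm (U * B)"
    using U(1) B(1) by (intro frob_norm_mult_unitary_right[of _ n n] unitary_mat_adjoint assms) auto
  also have "\<dots> = frob_norm B"
    using assms(1) B(1) by (rule frob_norm_mult_unitary_left)
  finally show ?thesis
    using frob_norm_unitary[OF assms(2)] by simp
qed

lemma frob_norm_conj_derivative_le:
  assumes "unitary_mat n U" "unitary_mat n B" "V \<in> carrier_mat n n"
  shows "frob_norm (V * U * B * mat_adjoint U + U * B * mat_adjoint (V * U)) \<le> 2 * frob_norm V"
proof -
  note U = unitary_matD[OF assms(1)] and B = unitary_matD[OF assms(2)]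
  have VU: "V * U \<in> carrier_mat n n" "V * U * B \<in> carrier_mat n n"
    using assms(3) U(1) B(1) by (auto intro!: mult_carrier_mat[of _ _ n])
  have first: "frob_norm (V * U * B * mat_adjoint U) = frob_norm V"
    using assms VU by (simp add: frob_norm_mult_unitary_right[of _ n n] unitary_mat_adjoint)
  have "U * B * mat_adjoint (V * U) = U * (B * (mat_adjoint U * mat_adjoint V))"
    using assms(3) U(1) B(1) by (simp add: mat_adjoint_mult[of _ n n _ n] assoc_mult_mat[of _ n n _ n _ n])
  moreover have "mat_adjoint U * mat_adjoint V \<in> carrier_mat n n"
    "B * (mat_adjoint U * mat_adjoint V) \<in> carrier_mat n n"
    using assms(3) U(1) B(1) by (auto intro!: mult_carrier_mat[of _ _ n])
  ultimately have second: "frob_norm (U * B * mat_adjoint (V * U)) = frob_norm V"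
    using assms by (simp add: frob_norm_mult_unitary_left[of n _ _ n] unitary_mat_adjoint frob_norm_adjoint)
  have "V * U * B * mat_adjoint U \<in> carrier_mat n n" "U * B * mat_adjoint (V * U) \<in> carrier_mat n n"
    using assms(3) U(1) B(1) VU by (auto intro!: mult_carrier_mat[of _ _ n])
  from frob_norm_add_le[OF this] show ?thesis
    using first second by simp
qed

lemma has_real_derivative_H2:
  assumes "\<And>t. W t \<in> carrier_mat (dL ^ n) (dL ^ n)" "W' \<in> carrier_mat (dL ^ n) (dL ^ n)"
    and "has_mat_derivative W W' x"
  shows "((\<lambda>t. H2 dL n (W t)) has_real_derivative - 1 / real (dL ^ n) ^ 6 *
    (\<Sum>a\<in>{..<dL ^ n} \<times> {..<dL ^ n}. \<Sum>b\<in>{..<dL ^ n} \<times> {..<dL ^ n}.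
      4 * cmod (mtrace (mat_adjoint (weyl dL n a) * (W x * weyl dL n b * mat_adjoint (W x)))) ^ 2 *
      Re (cnj (mtrace (mat_adjoint (weyl dL n a) * (W x * weyl dL n b * mat_adjoint (W x)))) *
          mtrace (mat_adjoint (weyl dL n a) *
            (W' * weyl dL n b * mat_adjoint (W x) + W x * weyl dL n b * mat_adjoint W'))))) (at x)"
    (is "(_ has_real_derivative _ * ?D) _")
proof -
  let ?L = "{..<dL ^ n} \<times> {..<dL ^ n}"
  have "((\<lambda>t. \<Sum>a\<in>?L. \<Sum>b\<in>?L.
      cmod (mtrace (mat_adjoint (weyl dL n a) * (W t * weyl dL n b * mat_adjoint (W t)))) ^ 4)
    has_real_derivative ?D) (at x)"
    using assms by (intro has_real_derivative_sum_norm_mtrace_conj_pow4[of _ _ "dL ^ n"]) auto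
  from DERIV_diff[OF DERIV_const DERIV_cmult[OF this, of "1 / real (dL ^ n) ^ 6"], of 1]
  show ?thesis
    by (simp add: H2_eq_sum_weyl[OF assms(1)])
qed

lemma abs_sum_norm_pow4_derivative_le:
  fixes T T' :: "'a \<Rightarrow> 'b \<Rightarrow> complex"
  assumes "finite A" "finite B"
    and "\<And>b. b \<in> B \<Longrightarrow> (\<Sum>a\<in>A. cmod (T a b) ^ 2) \<le> s"
    and "\<And>b. b \<in> B \<Longrightarrow> (\<Sum>a\<in>A. cmod (T' a b) ^ 2) \<le> r"
  shows "\<bar>\<Sum>a\<in>A. \<Sum>b\<in>B. 4 * cmod (T a b) ^ 2 * Re (cnj (T a b) * T' a b)\<bar>
    \<le> 4 * real (card B) * (s * sqrt (s * r))"
proof -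
  have "\<bar>4 * cmod (T a b) ^ 2 * Re (cnj (T a b) * T' a b)\<bar> \<le> 4 * (cmod (T a b) ^ 3 * cmod (T' a b))" for a b
    using abs_Re_le_cmod[of "cnj (T a b) * T' a b"]
    by (simp add: abs_mult norm_mult power2_eq_square power3_eq_cube mult_left_mono)
  then have "\<bar>\<Sum>a\<in>A. \<Sum>b\<in>B. 4 * cmod (T a b) ^ 2 * Re (cnj (T a b) * T' a b)\<bar>
      \<le> (\<Sum>a\<in>A. \<Sum>b\<in>B. 4 * (cmod (T a b) ^ 3 * cmod (T' a b)))"
    by (intro order_trans[OF sum_abs] sum_mono order_trans[OF sum_abs]) auto
  also have "\<dots> = 4 * (\<Sum>b\<in>B. \<Sum>a\<in>A. cmod (T a b) ^ 3 * cmod (T' a b))"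
    by (subst sum.swap) (simp add: sum_distrib_left)
  also have "\<dots> \<le> 4 * (\<Sum>b\<in>B. s * sqrt (s * r))"
    using assms by (intro mult_left_mono sum_mono sum_cube_mult_le) auto
  finally show ?thesis
    by simp
qed

lemma sum_norm_mtrace_weyl_conj_sq:
  assumes "0 < dL" "unitary_mat (dL ^ n) U"
  shows "(\<Sum>a\<in>{..<dL ^ n} \<times> {..<dL ^ n}.
      cmod (mtrace (mat_adjoint (weyl dL n a) * (U * weyl dL n b * mat_adjoint U))) ^ 2) = real (dL ^ n) ^ 2"
proof -
  have "U * weyl dL n b * mat_adjoint U \<in> carrier_mat (dL ^ n) (dL ^ n)"
    using unitary_matD(1)[OF assms(2)] by (auto intro!: mult_carrier_mat[of _ _ "dL ^ n"])
  from sum_norm_mtrace_weyl_sq[OF assms(1) this] show ?thesis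
    using frob_norm_unitary_conj[OF assms(2) weyl_unitary[OF assms(1)]] by (simp flip: power2_eq_square)
qed

lemma sum_norm_mtrace_weyl_conj_derivative_sq_le:
  assumes "0 < dL" "unitary_mat (dL ^ n) U" "V \<in> carrier_mat (dL ^ n) (dL ^ n)"
  shows "(\<Sum>a\<in>{..<dL ^ n} \<times> {..<dL ^ n}. cmod (mtrace (mat_adjoint (weyl dL n a) *
      (V * U * weyl dL n b * mat_adjoint U + U * weyl dL n b * mat_adjoint (V * U)))) ^ 2)
    \<le> 4 * real (dL ^ n) * frob_norm V ^ 2"
proof -
  define M where "M = V * U * weyl dL n b * mat_adjoint U + U * weyl dL n b * mat_adjoint (V * U)"
  have "M \<in> carrier_mat (dL ^ n) (dL ^ n)"
    using unitary_matD(1)[OF assms(2)] assms(3)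
    by (auto intro!: mult_carrier_mat[of _ _ "dL ^ n"] add_carrier_mat simp: M_def)
  moreover have "frob_norm M ^ 2 \<le> (2 * frob_norm V) ^ 2"
    using frob_norm_conj_derivative_le[OF assms(2) weyl_unitary[OF assms(1)] assms(3)]
    by (intro power_mono) (auto simp: M_def frob_norm_nonneg)
  then have "real (dL ^ n) * frob_norm M ^ 2 \<le> real (dL ^ n) * (4 * frob_norm V ^ 2)"
    by (intro mult_left_mono) (simp_all add: power_mult_distrib)
  ultimately show ?thesis
    by (simp add: sum_norm_mtrace_weyl_sq[OF assms(1)] flip: M_def)
qed

lemma H2_derivative_bound:
  assumes "0 < dL" "unitary_mat (dL ^ n) U" "V \<in> carrier_mat (dL ^ n) (dL ^ n)"
    and "\<And>t. W t \<in> carrier_mat (dL ^ n) (dL ^ n)" "W x = U" "has_mat_derivative W (V * U) x"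
  shows "\<exists>D. ((\<lambda>t. H2 dL n (W t)) has_real_derivative D) (at x) \<and>
    \<bar>D\<bar> \<le> 8 * frob_norm V / sqrt (real (dL ^ n))"
proof -
  define d where "d = dL ^ n"
  define L where "L = {..<d} \<times> {..<d}"
  define T where "T a b = mtrace (mat_adjoint (weyl dL n a) * (U * weyl dL n b * mat_adjoint U))" for a b
  define T' where "T' a b = mtrace (mat_adjoint (weyl dL n a) *
    (V * U * weyl dL n b * mat_adjoint U + U * weyl dL n b * mat_adjoint (V * U)))" for a b
  define S where "S = (\<Sum>a\<in>L. \<Sum>b\<in>L. 4 * cmod (T a b) ^ 2 * Re (cnj (T a b) * T' a b))"
  have "((\<lambda>t. H2 dL n (W t)) has_real_derivative - 1 / real d ^ 6 * S) (at x)"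
    using has_real_derivative_H2[OF assms(4) _ assms(6)] assms(3,5) unitary_matD(1)[OF assms(2)]
    by (simp add: S_def T_def T'_def L_def d_def mult_carrier_mat)
  moreover have "\<bar>- 1 / real d ^ 6 * S\<bar> \<le> 8 * frob_norm V / sqrt (real d)"
  proof -
    have "\<bar>S\<bar> \<le> 4 * real (card L) * (real d ^ 2 * sqrt (real d ^ 2 * (4 * real d * frob_norm V ^ 2)))"
      unfolding S_def T_def T'_def L_def d_def
      using sum_norm_mtrace_weyl_conj_sq[OF assms(1,2)]
        sum_norm_mtrace_weyl_conj_derivative_sq_le[OF assms(1-3)]
      by (intro abs_sum_norm_pow4_derivative_le) auto
    also have "\<dots> = 8 * frob_norm V * real d ^ 6 / sqrt (real d)"
    proof -
      have "0 < real d" "sqrt (real d) ^ 2 = real d"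
        using assms(1) by (simp_all add: d_def)
      then show ?thesis
        by (simp add: L_def real_sqrt_mult frob_norm_nonneg field_simps power2_eq_square eval_nat_numeral)
    qed
    finally show ?thesis
      using assms(1) by (simp add: d_def abs_mult field_simps)
  qed
  ultimately show ?thesis
    unfolding d_def by blast
qed

theorem theorem9:
  fixes dL n :: nat and U K :: "complex mat"
  assumes "dL \<ge> 2"
    and "unitary_mat (dL ^ n) U"
    and "K \<in> carrier_mat (dL ^ n) (dL ^ n)"
    and "mat_adjoint K = - K"
    and "frob_norm K = 1"
  shows "\<exists>D. ((\<lambda>t::real. H2 dL n (mat_exp (complex_of_real t \<cdot>\<^sub>m K) * U))
              has_real_derivative D) (at 0)
           \<and> \<bar>D\<bar> \<le> 8 / sqrt (real (dL ^ n))"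
proof -
  define W where "W t = mat_exp (complex_of_real t \<cdot>\<^sub>m K) * U" for t
  have U: "U \<in> carrier_mat (dL ^ n) (dL ^ n)"
    using unitary_matD(1)[OF assms(2)] .
  have E: "mat_exp (complex_of_real t \<cdot>\<^sub>m K) \<in> carrier_mat (dL ^ n) (dL ^ n)" for t
    using assms(3) by (simp add: mat_exp_carrier)
  have "W t \<in> carrier_mat (dL ^ n) (dL ^ n)" for t
    unfolding W_def using E U by (rule mult_carrier_mat)
  moreover have "W 0 = U"
    using U by (simp add: W_def mat_exp_zero[OF assms(3)])
  moreover have "has_mat_derivative W (K * U) 0"
    unfolding W_def using E assms(3) U has_mat_derivative_mat_exp[OF assms(3)]
    by (rule has_mat_derivative_mult_const_right)
  \<comment> \<open>The bound holds for every direction of unit Frobenius norm.\<close>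
  ultimately show ?thesis
    using H2_derivative_bound[of dL n U K W 0] assms(1,2,3,5) by (simp add: W_def)
qed

end
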